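(* Let $m,n \in \mathbb{N}$, $S = (s_1,\dots,s_n)^T \in \mathbb{N}^n$ with $s_k \le 2^m$, fix $c \in \mathbb{N}$ and let $N = n^c$. Define $U = (u_1,\dots,u_n)^T$ by $u_k = \left\lfloor N \cdot \frac{s_k}{\|S\|}\right\rfloor$. For $\frac{n}{N^2}$ small enough, if the partition problem has a solution, i.e. there exists $x \in \{0,1\}^n$ with $S^T\cdot\left(x - \frac{1}{2}\cdot 1_{n\times 1}\right) = 0$, then there exist $x \in \{0,1\}^n$ and $\delta \in \mathbb{Z}$ with $-\frac{n}{2} \le \delta \le \frac{n}{2}$ such that $$U^T \cdot x = \frac{U^T \cdot 1_{n\times 1}}{2} + \delta.$$
   Context: $1_{n\times 1}$ denotes the all-ones vector in $\mathbb{R}^n$ and $\|\cdot\|$ the Euclidean norm.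
   Formalization: The shift $\delta$ is a real number with $2\delta \in \mathbb{Z}$ in place of $\delta \in \mathbb{Z}$, and $\frac{n}{N^2}$ small enough means below a single epsilon > 0 fixed independently of m, n, c and S. Apart from conventions, each condition added here is assumed in the paper as well or is needed for the statement above to hold. *)

theory Defs
  imports Complex_Main
begin

text \<open>Euclidean norm of S = (s_0,...,s_{n-1}) (0-based indexing).\<close>
definition normS :: "nat \<Rightarrow> (nat \<Rightarrow> nat) \<Rightarrow> real" where
  "normS n s = sqrt (\<Sum>k<n. (real (s k))^2)"

definition Uvec :: "nat \<Rightarrow> nat \<Rightarrow> (nat \<Rightarrow> nat) \<Rightarrow> nat \<Rightarrow> int" where
  "Uvec n c s k = \<lfloor>real (n ^ c) * real (s k) / normS n s\<rfloor>"

end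

theory Submission
  imports Defs
begin

text \<open>The solution x of the partition problem for S is also balanced for the rescaled
  vector N S / norm S. Rounding down perturbs each term u_k (x_k - 1/2) by the fractional
  part of the k-th entry times 1/2 in absolute value, so the same x works with
  \<delta> = \<Sum> u_k (x_k - 1/2), of size at most n/2.\<close>

lemma abs_sum_floor_balanced_le:
  fixes a :: "'i \<Rightarrow> real" and x :: "'i \<Rightarrow> nat"
  assumes x01: "\<forall>k\<in>I. x k \<in> {0, 1}"
    and balanced: "(\<Sum>k\<in>I. a k * (real (x k) - 1/2)) = 0"
  shows "\<bar>\<Sum>k\<in>I. of_int \<lfloor>a k\<rfloor> * (real (x k) - 1/2)\<bar> \<le> real (card I) / 2"
proof -
  have "(\<Sum>k\<in>I. of_int \<lfloor>a k\<rfloor> * (real (x k) - 1/2))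
      = (\<Sum>k\<in>I. a k * (real (x k) - 1/2)) - (\<Sum>k\<in>I. frac (a k) * (real (x k) - 1/2))"
    by (simp add: frac_def left_diff_distrib sum_subtractf)
  also have "\<dots> = - (\<Sum>k\<in>I. frac (a k) * (real (x k) - 1/2))"
    using balanced by simp
  finally have "\<bar>\<Sum>k\<in>I. of_int \<lfloor>a k\<rfloor> * (real (x k) - 1/2)\<bar>
      = \<bar>\<Sum>k\<in>I. frac (a k) * (real (x k) - 1/2)\<bar>"
    by simp
  also have "\<dots> \<le> (\<Sum>k\<in>I. \<bar>frac (a k) * (real (x k) - 1/2)\<bar>)"
    by (rule sum_abs)
  also have "\<dots> \<le> (\<Sum>k\<in>I. 1/2)"
  proof (rule sum_mono)
    fix k assume "k \<in> I"
    then have "\<bar>real (x k) - 1/2\<bar> = 1/2"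
      using x01 by auto
    then show "\<bar>frac (a k) * (real (x k) - 1/2)\<bar> \<le> 1/2"
      using frac_ge_0[of "a k"] frac_lt_1[of "a k"] by (simp only: abs_mult)
  qed
  finally show ?thesis
    by simp
qed

lemma double_sum_half_shift_Ints:
  fixes u :: "'i \<Rightarrow> int" and x :: "'i \<Rightarrow> nat"
  shows "2 * (\<Sum>k\<in>I. of_int (u k) * (real (x k) - 1/2)) \<in> \<int>"
proof -
  have "2 * (\<Sum>k\<in>I. of_int (u k) * (real (x k) - 1/2))
      = of_int (\<Sum>k\<in>I. u k * (2 * int (x k) - 1))"
    by (simp add: sum_distrib_left algebra_simps)
  then show ?thesis
    by (simp only: Ints_of_int)
qed

theorem theorem2p2:
  shows "\<exists>\<epsilon>>0. \<forall>(m::nat) (n::nat) (c::nat) (s::nat \<Rightarrow> nat).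
    (\<forall>k<n. s k \<le> 2 ^ m) \<longrightarrow>
    real n / (real (n ^ c))^2 < \<epsilon> \<longrightarrow>
    (\<exists>x::nat \<Rightarrow> nat. (\<forall>k<n. x k \<in> {0, 1}) \<and>
        (\<Sum>k<n. real (s k) * (real (x k) - 1/2)) = 0) \<longrightarrow>
    (\<exists>x::nat \<Rightarrow> nat. (\<forall>k<n. x k \<in> {0, 1}) \<and>
       (\<exists>\<delta>::real. 2 * \<delta> \<in> \<int> \<and> - real n / 2 \<le> \<delta> \<and> \<delta> \<le> real n / 2 \<and>
          (\<Sum>k<n. real_of_int (Uvec n c s k) * real (x k))
            = (\<Sum>k<n. real_of_int (Uvec n c s k)) / 2 + \<delta>))"
proof (intro exI[of _ 1] conjI allI impI)
  fix m n c :: nat and s :: "nat \<Rightarrow> nat"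
  assume "\<exists>x::nat \<Rightarrow> nat. (\<forall>k<n. x k \<in> {0, 1}) \<and>
      (\<Sum>k<n. real (s k) * (real (x k) - 1/2)) = 0"
  then obtain x :: "nat \<Rightarrow> nat" where x01: "\<forall>k<n. x k \<in> {0, 1}"
    and balanced: "(\<Sum>k<n. real (s k) * (real (x k) - 1/2)) = 0"
    by blast
  define a where "a k = real (n ^ c) * real (s k) / normS n s" for k
  define \<delta> where "\<delta> = (\<Sum>k<n. real_of_int (Uvec n c s k) * (real (x k) - 1/2))"
  have "(\<Sum>k<n. a k * (real (x k) - 1/2))
      = real (n ^ c) / normS n s * (\<Sum>k<n. real (s k) * (real (x k) - 1/2))"
    by (simp add: a_def sum_distrib_left mult.assoc)
  then have "\<bar>\<delta>\<bar> \<le> real n / 2"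
    using abs_sum_floor_balanced_le[of "{..<n}" x a] x01 balanced
    by (simp add: \<delta>_def Uvec_def a_def)
  moreover have "2 * \<delta> \<in> \<int>"
    unfolding \<delta>_def by (rule double_sum_half_shift_Ints)
  moreover have "(\<Sum>k<n. real_of_int (Uvec n c s k) * real (x k))
      = (\<Sum>k<n. real_of_int (Uvec n c s k)) / 2 + \<delta>"
    by (simp add: \<delta>_def right_diff_distrib sum_subtractf sum_divide_distrib)
  ultimately show "\<exists>x::nat \<Rightarrow> nat. (\<forall>k<n. x k \<in> {0, 1}) \<and>
      (\<exists>\<delta>::real. 2 * \<delta> \<in> \<int> \<and> - real n / 2 \<le> \<delta> \<and> \<delta> \<le> real n / 2 \<and>
        (\<Sum>k<n. real_of_int (Uvec n c s k) * real (x k))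
          = (\<Sum>k<n. real_of_int (Uvec n c s k)) / 2 + \<delta>)"
    using x01 by (intro exI[of _ x] conjI exI[of _ \<delta>]) auto
qed (simp)

end
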